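(* Assume CH. There exists a Luzin set $L\subseteq\mathbb{R}$ such that $L+L=\{a+b:a,b\in L\}$ is a Bernstein set.
   Context: A Luzin set is a set $L\subseteq\mathbb{R}$ with $|L|=\mathfrak{c}$ such that $L\cap M$ is countable for every meager $M\subseteq\mathbb{R}$. A set $B\subseteq\mathbb{R}$ is a Bernstein set if for every nonempty perfect set $P\subseteq\mathbb{R}$ both $B\cap P\neq\emptyset$ and $(\mathbb{R}\setminus B)\cap P\neq\emptyset$. *)

theory Defs
  imports "HOL-Analysis.Analysis" "HOL-Library.Equipollence"
begin

definition CH :: bool where
  "CH \<longleftrightarrow> (\<forall>A::real set. countable A \<or> A \<approx> (UNIV::real set))"

definition nowhere_dense :: "real set \<Rightarrow> bool" where
  "nowhere_dense A \<longleftrightarrow> interior (closure A) = {}"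

definition meager :: "real set \<Rightarrow> bool" where
  "meager M \<longleftrightarrow> (\<exists>N :: nat \<Rightarrow> real set. (\<forall>n. nowhere_dense (N n)) \<and> M \<subseteq> (\<Union>n. N n))"

definition perfect_set :: "real set \<Rightarrow> bool" where
  "perfect_set P \<longleftrightarrow> closed P \<and> (\<forall>x\<in>P. x islimpt P)"

definition Luzin_set :: "real set \<Rightarrow> bool" where
  "Luzin_set L \<longleftrightarrow> L \<approx> (UNIV::real set) \<and> (\<forall>M. meager M \<longrightarrow> countable (L \<inter> M))"

definition Bernstein_set :: "real set \<Rightarrow> bool" where
  "Bernstein_set B \<longleftrightarrow> (\<forall>P. perfect_set P \<and> P \<noteq> {} \<longrightarrow> B \<inter> P \<noteq> {} \<and> (UNIV - B) \<inter> P \<noteq> {})"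

definition sumset :: "real set \<Rightarrow> real set \<Rightarrow> real set" where
  "sumset A B = {a + b | a b. a \<in> A \<and> b \<in> B}"

end

theory Submission
  imports Defs
begin

text \<open>Under CH the reals can be well-ordered so that every initial segment is countable.
Along such an order we list all codes of countable families of closed sets, so that every
meager set is covered by, and every nonempty perfect set equals, a set coded at some stage.
At stage \<open>a\<close> we add two points \<open>x\<close>, \<open>y\<close> to \<open>L\<close> and one point \<open>z\<close> to a set of
forbidden sums: \<open>x\<close> and \<open>y\<close> avoid the meager sets coded so far, \<open>x + y\<close> and \<open>z\<close> lie in
the perfect set coded at \<open>a\<close>, and no sum of two points of \<open>L\<close> ever equals a forbidden
point. Such a triple exists because, once \<open>x + y = p\<close> is fixed, only a meager set of
candidates \<open>x\<close> is excluded. Then \<open>L\<close> meets a meager set only in the countably many points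
added before that set was listed, while \<open>L + L\<close> meets every perfect set (at \<open>x + y\<close>) and
misses one of its points (namely \<open>z\<close>).\<close>

section \<open>Meager and perfect sets\<close>

lemma meager_iff_closed_cover:
  "meager M \<longleftrightarrow> (\<exists>G. countable G \<and> (\<forall>T\<in>G. closed T \<and> interior T = {}) \<and> M \<subseteq> \<Union>G)"
proof
  assume "meager M"
  then obtain N :: "nat \<Rightarrow> real set" where N: "\<And>n. nowhere_dense (N n)" "M \<subseteq> (\<Union>n. N n)"
    unfolding meager_def by blast
  have "(\<Union>n. N n) \<subseteq> (\<Union>n. closure (N n))"
    by (intro UN_mono subset_refl closure_subset)
  with N(2) have "M \<subseteq> \<Union>(range (\<lambda>n. closure (N n)))"
    by (rule order_trans)
  with N(1) show "\<exists>G. countable G \<and> (\<forall>T\<in>G. closed T \<and> interior T = {}) \<and> M \<subseteq> \<Union>G"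
    by (intro exI[of _ "range (\<lambda>n. closure (N n))"]) (auto simp: nowhere_dense_def)
next
  assume "\<exists>G. countable G \<and> (\<forall>T\<in>G. closed T \<and> interior T = {}) \<and> M \<subseteq> \<Union>G"
  then obtain G where G: "countable G" "\<And>T. T \<in> G \<Longrightarrow> closed T \<and> interior T = {}" "M \<subseteq> \<Union>G"
    by blast
  define N where "N = (if G = {} then (\<lambda>_. {}) else from_nat_into G)"
  have "nowhere_dense (N n)" for n
    using G(2)[OF from_nat_into[of G n]] by (simp add: N_def nowhere_dense_def)
  moreover have "M \<subseteq> (\<Union>n. N n)"
    using G by (auto simp: N_def)
  ultimately show "meager M"
    unfolding meager_def by blast
qed

lemma meager_UN:
  assumes "countable K" "\<And>k. k \<in> K \<Longrightarrow> meager (M k)"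
  shows "meager (\<Union>k\<in>K. M k)"
proof -
  obtain G where G: "\<And>k. k \<in> K \<Longrightarrow> countable (G k) \<and> (\<forall>T\<in>G k. closed T \<and> interior T = {}) \<and> M k \<subseteq> \<Union>(G k)"
    using assms(2) unfolding meager_iff_closed_cover by metis
  show ?thesis
    unfolding meager_iff_closed_cover
    by (rule exI[of _ "\<Union>k\<in>K. G k"]) (use assms(1) G in fastforce)
qed

lemma meager_Un: "meager M \<Longrightarrow> meager N \<Longrightarrow> meager (M \<union> N)"
  using meager_UN[of "{True, False}" "\<lambda>b. if b then M else N"] by (simp add: Un_commute)

lemma countable_imp_meager: "countable C \<Longrightarrow> meager C"
  unfolding meager_iff_closed_cover by (rule exI[of _ "(\<lambda>t. {t}) ` C"]) auto

lemma meager_reflection: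
  assumes "meager M"
  shows "meager ((\<lambda>t. p - t) ` M)"
proof -
  obtain G where G: "countable G" "\<And>T. T \<in> G \<Longrightarrow> closed T \<and> interior T = {}" "M \<subseteq> \<Union>G"
    using assms unfolding meager_iff_closed_cover by blast
  have reflect: "(\<lambda>t. p - t) ` T = (+) p ` uminus ` T" for T :: "real set"
    by (auto simp: image_image)
  have "closed ((\<lambda>t. p - t) ` T) \<and> interior ((\<lambda>t. p - t) ` T) = {}" if "T \<in> G" for T
    using G(2)[OF that] unfolding reflect
    by (simp add: interior_translation interior_negations closed_translation closed_negations)
  moreover have "(\<lambda>t. p - t) ` M \<subseteq> \<Union>((`) (\<lambda>t. p - t) ` G)"
    using G(3) by blast
  ultimately show ?thesis
    unfolding meager_iff_closed_cover using G(1) by blast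
qed

lemma not_meager_UNIV: "\<not> meager (UNIV :: real set)"
proof
  assume "meager (UNIV :: real set)"
  then obtain G :: "real set set" where G: "countable G" "\<And>T. T \<in> G \<Longrightarrow> closed T \<and> interior T = {}" "\<Union>G = UNIV"
    unfolding meager_iff_closed_cover by blast
  have "euclidean interior_of \<Union>G = {}"
    using completely_metrizable_space_euclidean G(1,2)
    by (intro Baire_category_alt) auto
  with G(3) show False
    by simp
qed

lemma perfect_set_uncountable:
  assumes "perfect_set P" "P \<noteq> {}"
  shows "uncountable P"
proof
  have "euclidean derived_set_of P = {x. x islimpt P}"
    by (auto simp: derived_set_of_def islimpt_def)
  also have "\<dots> = P"
    using assms(1) unfolding perfect_set_def closed_limpt by blast
  finally have "(UNIV :: real set) \<lesssim> P"
    using assms(2) completely_metrizable_space_euclidean by (intro lepoll_perfect_set) auto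
  moreover assume "countable P"
  ultimately show False
    using countable_lepoll uncountable_UNIV_real by blast
qed

lemma closed_eq_closure_range:
  fixes C :: "'a::{metric_space, second_countable_topology} set"
  assumes "closed C" "C \<noteq> {}"
  obtains d :: "nat \<Rightarrow> 'a" where "closure (range d) = C"
proof -
  obtain T where T: "countable T" "T \<subseteq> C" "C \<subseteq> closure T"
    using separable by blast
  then have "T \<noteq> {}"
    using assms(2) by auto
  then have "closure (range (from_nat_into T)) = C"
    using T assms(1) by (simp add: closure_minimal subset_antisym)
  then show ?thesis ..
qed

section \<open>Codes for countable families of closed sets\<close>

text \<open>A code \<open>c\<close> describes the closed sets \<open>closure (range (c n))\<close>; every nonempty closed
set has this form, and there are only continuum many codes. The value \<open>UNIV\<close> of
\<open>coded_target\<close> on codes not describing a perfect set is a dummy that is merely uncountable.\<close>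

type_synonym code = "nat \<Rightarrow> nat \<Rightarrow> real"

definition coded_closed :: "code \<Rightarrow> nat \<Rightarrow> real set" where
  "coded_closed c n = closure (range (c n))"

definition coded_meager :: "code \<Rightarrow> real set" where
  "coded_meager c = (\<Union>n\<in>{n. interior (coded_closed c n) = {}}. coded_closed c n)"

definition coded_target :: "code \<Rightarrow> real set" where
  "coded_target c =
     (if perfect_set (coded_closed c 0) \<and> coded_closed c 0 \<noteq> {} then coded_closed c 0 else UNIV)"

lemma meager_coded_meager: "meager (coded_meager c)"
  unfolding meager_iff_closed_cover coded_meager_def
  by (rule exI[of _ "coded_closed c ` {n. interior (coded_closed c n) = {}}"])
     (auto simp: coded_closed_def)

lemma uncountable_coded_target: "uncountable (coded_target c)"
  by (simp add: coded_target_def perfect_set_uncountable uncountable_UNIV_real)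

lemma meager_subset_coded_meager:
  assumes "meager M"
  obtains c where "M \<subseteq> coded_meager c"
proof -
  obtain G where G: "countable G" "\<And>T. T \<in> G \<Longrightarrow> closed T \<and> interior T = {}" "M \<subseteq> \<Union>G"
    using assms unfolding meager_iff_closed_cover by blast
  show ?thesis
  proof (cases "G - {{}} = {}")
    case True
    with G(3) have "M = {}"
      by blast
    then show ?thesis
      using that by blast
  next
    case False
    define C where "C = from_nat_into (G - {{}})"
    have C: "C n \<in> G" "C n \<noteq> {}" for n
      using from_nat_into[OF False] by (auto simp: C_def)
    have "\<forall>n. \<exists>d :: nat \<Rightarrow> real. closure (range d) = C n"
      using C G(2) closed_eq_closure_range by metis
    then obtain c where c: "\<And>n. coded_closed c n = C n"
      unfolding coded_closed_def by metis
    have "M \<subseteq> \<Union>(range C)"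
      using G(1,3) False by (simp add: C_def) blast
    also have "\<dots> = coded_meager c"
      using C(1) G(2) by (simp add: coded_meager_def c)
    finally show ?thesis
      using that by blast
  qed
qed

lemma perfect_set_eq_coded_target:
  assumes "perfect_set P" "P \<noteq> {}"
  obtains c where "coded_target c = P"
proof -
  obtain d :: "nat \<Rightarrow> real" where "closure (range d) = P"
    using assms closed_eq_closure_range perfect_set_def by metis
  then have "coded_target (\<lambda>_. d) = P"
    using assms by (simp add: coded_target_def coded_closed_def)
  then show ?thesis ..
qed

lemma codes_lepoll_reals: "(UNIV :: code set) \<lesssim> (UNIV :: real set)"
proof -
  obtain h :: "real \<Rightarrow> nat set" where h: "inj h"
    using nat_sets_eqpoll_reals eqpoll_sym unfolding eqpoll_def bij_betw_def by blast
  define enc :: "code \<Rightarrow> nat set" where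
    "enc c = {prod_encode (i, prod_encode (j, k)) | i j k. k \<in> h (c i j)}" for c
  have "prod_encode (i, prod_encode (j, k)) \<in> enc c \<longleftrightarrow> k \<in> h (c i j)" for i j k c
    by (auto simp: enc_def prod_encode_eq)
  then have "enc c = enc c' \<Longrightarrow> c = c'" for c c'
    by (intro ext) (metis h injD subsetI subset_antisym)
  then have "inj enc"
    by (rule injI)
  then have "(UNIV :: code set) \<lesssim> (UNIV :: nat set set)"
    unfolding lepoll_def by blast
  also have "\<dots> \<lesssim> (UNIV :: real set)"
    by (simp add: eqpoll_imp_lepoll nat_sets_eqpoll_reals)
  finally show ?thesis .
qed

section \<open>One stage of the construction\<close>

definition no_new_sums :: "real set \<Rightarrow> real set \<Rightarrow> real \<Rightarrow> real \<Rightarrow> real \<Rightarrow> bool" where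
  "no_new_sums L Z x y z \<longleftrightarrow>
     (\<forall>u\<in>L \<union> {x, y}. \<forall>v\<in>L \<union> {x, y}. \<forall>w\<in>Z \<union> {z}. u + v = w \<longrightarrow> u \<notin> {x, y} \<and> v \<notin> {x, y} \<and> w \<noteq> z)"

lemma sumset_eq_image: "sumset A B = (\<lambda>(a, b). a + b) ` (A \<times> B)"
  by (auto simp: sumset_def)

lemma extension_step:
  assumes "countable L" "countable Z" "meager M" "uncountable Q"
  obtains x y z where "x \<notin> M" "y \<notin> M" "x \<notin> L" "x + y \<in> Q" "z \<in> Q" "no_new_sums L Z x y z"
proof -
  have pick: "\<exists>q. q \<in> Q - C" if "countable C" for C
    using uncountable_minus_countable[OF assms(4) that] by (metis countable_empty equals0I)
  obtain p where p: "p \<in> Q" "p \<notin> Z"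
    using pick[OF assms(2)] by blast
  have "countable (sumset L L \<union> {p})"
    using assms(1) by (simp add: sumset_eq_image)
  then obtain z where z: "z \<in> Q" "z \<notin> sumset L L" "z \<noteq> p"
    using pick by blast
  define Z' where "Z' = Z \<union> {z}"
  \<comment> \<open>The countably many \<open>x\<close> for which a sum involving \<open>x\<close> or \<open>y = p - x\<close> hits \<open>Z \<union> {z}\<close>.\<close>
  define C where "C = L \<union> (\<lambda>(w, b). w - b) ` (Z' \<times> L) \<union> (\<lambda>(w, b). p + b - w) ` (Z' \<times> L)
    \<union> (\<lambda>w. w / 2) ` Z' \<union> (\<lambda>w. p - w / 2) ` Z'"
  have "countable C"
    using assms(1,2) by (simp add: C_def Z'_def)
  then have "meager (M \<union> (\<lambda>t. p - t) ` M \<union> C)"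
    by (intro meager_Un[OF meager_Un] assms(3) meager_reflection[OF assms(3)] countable_imp_meager)
  then obtain x where x: "x \<notin> M \<union> (\<lambda>t. p - t) ` M \<union> C"
    using not_meager_UNIV by (metis UNIV_eq_I)
  define y where "y = p - x"
  have "y \<notin> M"
  proof
    assume "y \<in> M"
    then have "x \<in> (\<lambda>t. p - t) ` M"
      by (rule rev_image_eqI) (simp add: y_def)
    with x show False
      by blast
  qed
  have old_new: "x + b \<noteq> w" "y + b \<noteq> w" if "w \<in> Z'" "b \<in> L" for w b
  proof -
    have "(w, b) \<in> Z' \<times> L"
      using that by simp
    then have "w - b \<in> C" "p + b - w \<in> C"
      unfolding C_def by (fastforce intro: rev_image_eqI)+
    with x show "x + b \<noteq> w" "y + b \<noteq> w"
      by (auto simp: y_def)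
  qed
  have new_new: "x + x \<noteq> w" "y + y \<noteq> w" "x + y \<noteq> w" if "w \<in> Z'" for w
    using x that p z by (auto simp: C_def y_def Z'_def field_simps)
  have old_old: "a + b \<noteq> z" if "a \<in> L" "b \<in> L" for a b
    using z that by (auto simp: sumset_def)
  have "no_new_sums L Z x y z"
    unfolding no_new_sums_def
  proof (intro ballI impI)
    fix u v w assume u: "u \<in> L \<union> {x, y}" and v: "v \<in> L \<union> {x, y}" and "w \<in> Z \<union> {z}" "u + v = w"
    then have "w \<in> Z'" "v + u = w"
      by (simp_all add: Z'_def add.commute)
    with u v show "u \<notin> {x, y} \<and> v \<notin> {x, y} \<and> w \<noteq> z"
      using old_new new_new old_old \<open>u + v = w\<close> by (metis UnE insertE empty_iff add.commute)
  qed
  moreover have "x \<notin> M" "x \<notin> L" "x + y \<in> Q"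
    using x p by (auto simp: C_def y_def)
  ultimately show ?thesis
    using that \<open>y \<notin> M\<close> z by blast
qed

section \<open>The transfinite construction\<close>

lemma CH_strict_wellorder_countable_under:
  assumes "CH"
  obtains R :: "real rel" where "wf R" "trans R" "\<And>a b. a \<noteq> b \<Longrightarrow> (a, b) \<in> R \<or> (b, a) \<in> R"
    "\<And>a. countable (under R a)"
proof -
  obtain r :: "real rel" where r: "Well_order r" "Field r = UNIV"
    using well_ordering by metis
  define R0 where "R0 = r - Id"
  have lin: "linear_order_on UNIV r" and "wf R0"
    using r unfolding R0_def well_order_on_def by simp_all
  moreover have "strict_linear_order_on UNIV R0"
    unfolding R0_def by (rule strict_linear_order_on_diff_Id[OF lin])
  ultimately have R0: "wf R0" "trans R0" "\<And>a b. a \<noteq> b \<Longrightarrow> (a, b) \<in> R0 \<or> (b, a) \<in> R0"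
    unfolding strict_linear_order_on_def total_on_def by blast+
  show ?thesis
  proof (cases "\<forall>a. countable (under R0 a)")
    case True
    show ?thesis
      by (rule that) (use R0 True in auto)
  next
    case False
    then obtain x where "x \<in> {a. uncountable (under R0 a)}"
      by blast
    then obtain z where z: "uncountable (under R0 z)" "\<And>b. (b, z) \<in> R0 \<Longrightarrow> countable (under R0 b)"
      by (rule wfE_min[OF R0(1)]) auto
    \<comment> \<open>Transport \<open>R0\<close> along a bijection onto the first uncountable initial segment.\<close>
    have "under R0 z \<approx> (UNIV :: real set)"
      using z(1) assms unfolding CH_def by blast
    then have "(UNIV :: real set) \<approx> under R0 z"
      by (rule eqpoll_sym)
    then obtain f :: "real \<Rightarrow> real" where f: "bij_betw f UNIV (under R0 z)"
      unfolding eqpoll_def by blast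
    then have inj: "inj f" and fz: "(f a, z) \<in> R0" for a
      using bij_betw_apply[OF f] by (simp_all add: bij_betw_def under_def)
    have "countable (under (inv_image R0 f) a)" for a
    proof (rule countable_image_inj_on)
      show "countable (f ` under (inv_image R0 f) a)"
        using z(2)[OF fz] by (rule countable_subset[rotated]) (auto simp: under_def)
    qed (rule inj_on_subset[OF inj subset_UNIV])
    moreover have "a \<noteq> b \<Longrightarrow> (a, b) \<in> inv_image R0 f \<or> (b, a) \<in> inv_image R0 f" for a b
      using R0(3) inj by (simp add: inj_eq)
    ultimately show ?thesis
      using R0(1,2) by (intro that[of "inv_image R0 f"]) (simp_all add: trans_inv_image)
  qed
qed

lemma wf_recursive_choice:
  assumes "wf R"
    and "\<And>f a. \<exists>t. P f a t"
    and "\<And>f g a. (\<And>b. (b, a) \<in> R \<Longrightarrow> f b = g b) \<Longrightarrow> P f a = P g a"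
  obtains F where "\<And>a. P F a (F a)"
proof -
  define F where "F = wfrec R (\<lambda>f a. SOME t. P f a t)"
  have "P F a (F a)" for a
  proof -
    have "F a = (SOME t. P (cut F R a) a t)"
      unfolding F_def by (rule wfrec[OF assms(1)])
    also have "P (cut F R a) a = P F a"
      by (rule assms(3)) (simp add: cut_apply)
    finally show ?thesis
      using someI_ex[OF assms(2)] by simp
  qed
  then show ?thesis ..
qed

lemma finite_has_greatest_wrt:
  assumes "finite A" "A \<noteq> {}" "trans R" "\<And>a b. a \<noteq> b \<Longrightarrow> (a, b) \<in> R \<or> (b, a) \<in> R"
  shows "\<exists>m\<in>A. \<forall>a\<in>A. a = m \<or> (a, m) \<in> R"
  using assms(1,2)
proof (induction A rule: finite_ne_induct)
  case (insert x A)
  then obtain m where "m \<in> A" "\<forall>a\<in>A. a = m \<or> (a, m) \<in> R"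
    by blast
  then show ?case
    using assms(4)[of x m] transD[OF assms(3)] by (metis insert_iff)
qed simp

definition admissible_triple ::
    "real set \<Rightarrow> real set \<Rightarrow> real set \<Rightarrow> real set \<Rightarrow> real \<Rightarrow> real \<Rightarrow> real \<Rightarrow> bool" where
  "admissible_triple L Z M Q x y z \<longleftrightarrow>
     x \<notin> M \<and> y \<notin> M \<and> x \<notin> L \<and> x + y \<in> Q \<and> z \<in> Q \<and> no_new_sums L Z x y z"

text \<open>Stage \<open>a\<close> adds \<open>X a\<close> and \<open>Y a\<close> to the Luzin set and forbids \<open>Z a\<close> as a sum;
\<open>cod\<close> lists all codes along \<open>R\<close>.\<close>

locale Luzin_sumset_construction =
  fixes R :: "real rel" and cod :: "real \<Rightarrow> code" and X Y Z :: "real \<Rightarrow> real"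
  assumes trans_R: "trans R"
    and total_R: "\<And>a b. a \<noteq> b \<Longrightarrow> (a, b) \<in> R \<or> (b, a) \<in> R"
    and countable_under: "\<And>a. countable (under R a)"
    and surj_cod: "surj cod"
    and admissible: "\<And>a. admissible_triple (X ` under R a \<union> Y ` under R a) (Z ` under R a)
      (\<Union>b\<in>insert a (under R a). coded_meager (cod b)) (coded_target (cod a)) (X a) (Y a) (Z a)"
begin

lemma X_Y_notin_coded_meager:
  assumes "b \<in> insert a (under R a)"
  shows "X a \<notin> coded_meager (cod b)" "Y a \<notin> coded_meager (cod b)"
  using admissible[of a] assms unfolding admissible_triple_def by blast+

lemma X_notin_earlier: "X a \<notin> X ` under R a \<union> Y ` under R a"
  using admissible[of a] unfolding admissible_triple_def by blast

lemma stage_hits_coded_target: "X a + Y a \<in> coded_target (cod a)" "Z a \<in> coded_target (cod a)"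
  using admissible[of a] unfolding admissible_triple_def by blast+

lemma stage_no_new_sums:
  "no_new_sums (X ` under R a \<union> Y ` under R a) (Z ` under R a) (X a) (Y a) (Z a)"
  using admissible[of a] unfolding admissible_triple_def by blast

definition L :: "real set" where
  "L = range X \<union> range Y"

lemma X_ne_earlier:
  assumes "(b, a) \<in> R"
  shows "X a \<noteq> X b"
proof -
  have "X b \<in> X ` under R a"
    by (rule imageI) (simp add: under_def assms)
  then show ?thesis
    using X_notin_earlier[of a] by auto
qed

lemma inj_X: "inj X"
  by (rule injI) (metis X_ne_earlier total_R)

lemma L_eqpoll_UNIV: "L \<approx> (UNIV :: real set)"
proof (rule lepoll_antisym)
  show "L \<lesssim> (UNIV :: real set)"
    by (simp add: subset_imp_lepoll)
  show "(UNIV :: real set) \<lesssim> L"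
    unfolding lepoll_def L_def using inj_X by blast
qed

lemma countable_L_Int_meager:
  assumes "meager M"
  shows "countable (L \<inter> M)"
proof -
  obtain c where c: "M \<subseteq> coded_meager c"
    using assms by (rule meager_subset_coded_meager)
  obtain a where a: "cod a = c"
    using surj_cod by (metis surjD)
  \<comment> \<open>Points added after stage \<open>a\<close> avoid the meager set coded at \<open>a\<close>.\<close>
  have "L \<inter> M \<subseteq> X ` insert a (under R a) \<union> Y ` insert a (under R a)"
  proof
    fix t assume t: "t \<in> L \<inter> M"
    then obtain b where b: "t = X b \<or> t = Y b"
      unfolding L_def by blast
    have "b \<in> insert a (under R a)"
    proof (rule ccontr)
      assume "b \<notin> insert a (under R a)"
      then have "a \<in> insert b (under R b)"
        using total_R[of a b] by (auto simp: under_def)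
      then have "t \<notin> coded_meager c"
        using X_Y_notin_coded_meager b a by blast
      with t c show False
        by blast
    qed
    with b show "t \<in> X ` insert a (under R a) \<union> Y ` insert a (under R a)"
      by blast
  qed
  moreover have "countable (X ` insert a (under R a) \<union> Y ` insert a (under R a))"
    using countable_under[of a] by simp
  ultimately show ?thesis
    by (rule countable_subset)
qed

lemma Luzin_set_L: "Luzin_set L"
  unfolding Luzin_set_def using L_eqpoll_UNIV countable_L_Int_meager by blast

lemma sum_L_ne_Z:
  assumes "u \<in> L" "v \<in> L"
  shows "u + v \<noteq> Z d"
proof -
  obtain a b where ab: "u = X a \<or> u = Y a" "v = X b \<or> v = Y b"
    using assms unfolding L_def by blast
  \<comment> \<open>At the latest of the three stages involved, one of \<open>u\<close>, \<open>v\<close>, \<open>Z d\<close> is new.\<close>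
  obtain m where m: "m \<in> {a, b, d}" "\<forall>e\<in>{a, b, d}. e \<in> insert m (under R m)"
    using finite_has_greatest_wrt[of "{a, b, d}" R] trans_R total_R by (auto simp: under_def)
  have "u \<in> X ` under R m \<union> Y ` under R m \<union> {X m, Y m}" "v \<in> X ` under R m \<union> Y ` under R m \<union> {X m, Y m}"
    "Z d \<in> Z ` under R m \<union> {Z m}"
    using m(2) ab by auto
  moreover have "u \<in> {X m, Y m} \<or> v \<in> {X m, Y m} \<or> Z d = Z m"
    using m(1) ab by auto
  ultimately show ?thesis
    using stage_no_new_sums[of m] unfolding no_new_sums_def by blast
qed

lemma Bernstein_set_sumset_L: "Bernstein_set (sumset L L)"
  unfolding Bernstein_set_def
proof (intro allI impI)
  fix P assume P: "perfect_set P \<and> P \<noteq> {}"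
  obtain c where c: "coded_target c = P"
    using P perfect_set_eq_coded_target by blast
  obtain a where a: "cod a = c"
    using surj_cod by (metis surjD)
  have "X a + Y a \<in> sumset L L"
    unfolding sumset_def L_def by blast
  moreover have "Z a \<notin> sumset L L"
  proof
    assume "Z a \<in> sumset L L"
    then obtain u v where "u \<in> L" "v \<in> L" "Z a = u + v"
      unfolding sumset_def by blast
    with sum_L_ne_Z[of u v a] show False
      by simp
  qed
  ultimately show "sumset L L \<inter> P \<noteq> {} \<and> (UNIV - sumset L L) \<inter> P \<noteq> {}"
    using stage_hits_coded_target[of a] a c by blast
qed

end

lemma Luzin_sumset_construction_exists:
  assumes "CH"
  shows "\<exists>R cod X Y Z. Luzin_sumset_construction R cod X Y Z"
proof -
  obtain R :: "real rel" where R: "wf R" "trans R" "\<And>a b. a \<noteq> b \<Longrightarrow> (a, b) \<in> R \<or> (b, a) \<in> R"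
    "\<And>a. countable (under R a)"
    by (rule CH_strict_wellorder_countable_under[OF assms]) blast
  obtain g :: "code \<Rightarrow> real" where g: "inj g"
    using codes_lepoll_reals unfolding lepoll_def by blast
  define cod where "cod = inv g"
  define P where "P f a t \<longleftrightarrow> admissible_triple
      ((\<lambda>b. fst (f b)) ` under R a \<union> (\<lambda>b. fst (snd (f b))) ` under R a) ((\<lambda>b. snd (snd (f b))) ` under R a)
      (\<Union>b\<in>insert a (under R a). coded_meager (cod b)) (coded_target (cod a)) (fst t) (fst (snd t)) (snd (snd t))"
    for f :: "real \<Rightarrow> real \<times> real \<times> real" and a t
  have P_ex: "\<exists>t. P f a t" for f a
  proof -
    let ?L = "(\<lambda>b. fst (f b)) ` under R a \<union> (\<lambda>b. fst (snd (f b))) ` under R a"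
    let ?Z = "(\<lambda>b. snd (snd (f b))) ` under R a"
    let ?M = "\<Union>b\<in>insert a (under R a). coded_meager (cod b)"
    have "countable ?L" "countable ?Z"
      using R(4) by simp_all
    moreover have "meager ?M"
      using R(4) by (intro meager_UN meager_coded_meager) simp
    ultimately obtain x y z where "x \<notin> ?M" "y \<notin> ?M" "x \<notin> ?L" "x + y \<in> coded_target (cod a)"
      "z \<in> coded_target (cod a)" "no_new_sums ?L ?Z x y z"
      using uncountable_coded_target by (rule extension_step)
    then show ?thesis
      unfolding P_def admissible_triple_def by (intro exI[of _ "(x, y, z)"]) simp
  qed
  have P_cong: "P f a = P h a" if "\<And>b. (b, a) \<in> R \<Longrightarrow> f b = h b" for f h a
  proof -
    have "\<And>b. b \<in> under R a \<Longrightarrow> f b = h b"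
      using that by (simp add: under_def)
    then show ?thesis
      unfolding P_def by (simp cong: image_cong_simp)
  qed
  obtain F where F: "\<And>a. P F a (F a)"
    using wf_recursive_choice[where P = P, OF R(1) P_ex P_cong] by blast
  have "Luzin_sumset_construction R cod (\<lambda>a. fst (F a)) (\<lambda>a. fst (snd (F a))) (\<lambda>a. snd (snd (F a)))"
    using R(2-4) F g by unfold_locales (simp_all add: P_def cod_def inj_imp_surj_inv)
  then show ?thesis
    by blast
qed

theorem mainTheorem17:
  assumes "CH"
  shows "\<exists>L. Luzin_set L \<and> Bernstein_set (sumset L L)"
proof -
  obtain R cod X Y Z where "Luzin_sumset_construction R cod X Y Z"
    using Luzin_sumset_construction_exists[OF assms] by blast
  then interpret Luzin_sumset_construction R cod X Y Z .
  show ?thesis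
    using Luzin_set_L Bernstein_set_sumset_L by blast
qed

end
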